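(* Let $Y_t$ be a random variable taking values in a measurement space $\mathcal Y$, with distribution $p_{y,t}$, and let $p\in(0,1)$ and $\delta\in(0,1)$. Consider the following two cases. (Categorical case) $\mathcal Y$ is a finite set of cardinality $N$. Define $\mathcal R_{t,p}:=\{y\in\mathcal Y : p_{y,t}(\{y\})\ge p\}$. ($\gamma$-quantized case) $\mathcal Y\subset\mathbb R^n$ is bounded, $\gamma>0$, and $\mathcal Y_q$ is a minimal cover of $\mathcal Y$ by closed $\ell_\infty$-balls of radius $\gamma/2$ (called bins), with $N:=|\mathcal Y_q|$ finite (the covering number). Define $\mathcal R^{\gamma}_{t,p}:=\{y : \exists\, y_{\mathrm{bin}}\in\mathcal Y_q \text{ with } y\in y_{\mathrm{bin}} \text{ and } p_{y,t}(y_{\mathrm{bin}})\ge p\}$. Let $y_1,\dots,y_m$ be $m$ i.i.d. samples drawn from the distribution of $Y_t$. If $$ m\ \ge\ \max\left(N,\ \frac{\log(\delta/N)}{\log(1-p)}\right), $$ then $\mathbb P\big(\mathcal R^{(\gamma)}_{t,p}\subset \hat{\mathcal R}_t\big)\ge 1-\delta$, where in the categorical case $\mathcal R^{(\gamma)}_{t,p}=\mathcal R_{t,p}$ and $\hat{\mathcal R}_t=\{y_i\}_{i=1}^m$, and in the $\gamma$-quantized case $\mathcal R^{(\gamma)}_{t,p}=\mathcal R^{\gamma}_{t,p}$ and $\hat{\mathcal R}_t=\bigcup_{i=1}^m \mathcal B_\infty(y_i,\gamma)$, with $\mathcal B_\infty(y_i,\gamma)$ the closed $\ell_\infty$-ball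 centered at $y_i$ of radius $\gamma$.
   Context: Setting: $Y_t=h(X_t)$ is the measurement value at time $t$ of a (possibly stochastic) discrete-time control system ("dialogue process") in which the initial state $X_0$ is drawn from a distribution $p_0$, the inputs are drawn from input distributions, and $h$ is a deterministic readout map into $\mathcal Y$; $p_{y,t}$ denotes the resulting (pushforward) distribution of $Y_t$. The theorem only uses that $y_1,\dots,y_m$ are i.i.d. draws of $Y_t$. The set $\mathcal R^{(\gamma)}_{t,p}$ is called the $p$-approximate (respectively $(p,\gamma)$-approximate) reachable set at time $t$. *)

theory Defs
  imports "HOL-Probability.Probability"
begin

definition linf_cball :: "real^'n \<Rightarrow> real \<Rightarrow> (real^'n) set" where
  "linf_cball c r = {z. \<forall>j. \<bar>z $ j - c $ j\<bar> \<le> r}"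

definition bin_cover :: "real \<Rightarrow> (real^'n) set \<Rightarrow> (real^'n) set set \<Rightarrow> bool" where
  "bin_cover \<gamma> Y Q \<longleftrightarrow> finite Q \<and> Y \<subseteq> \<Union>Q \<and> (\<forall>b\<in>Q. \<exists>c. b = linf_cball c (\<gamma>/2))"

definition min_bin_cover :: "real \<Rightarrow> (real^'n) set \<Rightarrow> (real^'n) set set \<Rightarrow> bool" where
  "min_bin_cover \<gamma> Y Q \<longleftrightarrow> bin_cover \<gamma> Y Q \<and> (\<forall>Q'. bin_cover \<gamma> Y Q' \<longrightarrow> card Q \<le> card Q')"

end

theory Submission imports Defs begin

text \<open>Call a target heavy if each sample hits it with probability at least \<open>p\<close>.
  All \<open>m\<close> independent samples miss a given heavy target with probability at most
  \<open>(1 - p)^m\<close>, so by the union bound some of the at most \<open>N\<close> heavy targets (points in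
  the categorical case, bins in the quantized case) is missed with probability at most
  \<open>N (1 - p)^m\<close>, which the bound on \<open>m\<close> makes at most \<open>\<delta>\<close>. A sample lying in a bin of
  radius \<open>\<gamma>/2\<close> has the whole bin inside its \<open>\<gamma>\<close>-ball.\<close>

lemma mult_power_le_of_ln_bound:
  fixes p \<delta> N :: real and m :: nat
  assumes "0 < p" "p < 1" "0 < \<delta>" "0 \<le> N" and m: "ln (\<delta> / N) / ln (1 - p) \<le> real m"
  shows "N * (1 - p) ^ m \<le> \<delta>"
proof (cases "N = 0")
  case False
  have "ln (1 - p) < 0" using assms by simp
  then have "real m * ln (1 - p) \<le> ln (\<delta> / N)"
    using m by (simp add: divide_le_eq mult.commute)
  then have "exp (real m * ln (1 - p)) \<le> \<delta> / N"
    using assms False by (metis exp_le_cancel_iff exp_ln divide_pos_pos order_le_neq_trans)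
  then have "(1 - p) ^ m \<le> \<delta> / N"
    using assms by (simp add: exp_of_nat_mult)
  then show ?thesis using assms False by (simp add: field_simps)
qed (use assms in simp)

lemma (in prob_space) prob_all_miss_le:
  assumes indep: "indep_vars (\<lambda>_. N) X I" and "finite I" and B: "B \<in> sets N"
    and hit: "\<And>i. i \<in> I \<Longrightarrow> p \<le> prob (X i -` B \<inter> space M)"
  shows "prob {\<omega> \<in> space M. \<forall>i\<in>I. X i \<omega> \<notin> B} \<le> (1 - p) ^ card I"
proof (cases "I = {}")
  case False
  have rv: "X i \<in> measurable M N" if "i \<in> I" for i
    using indep that by (auto simp: indep_vars_def)
  have miss: "X i -` (space N - B) \<inter> space M = space M - (X i -` B \<inter> space M)" if "i \<in> I" for i
    using rv[OF that] by (auto simp: measurable_def)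
  have "{\<omega> \<in> space M. \<forall>i\<in>I. X i \<omega> \<notin> B} = (\<Inter>i\<in>I. X i -` (space N - B) \<inter> space M)"
    using False measurable_space[OF rv] by auto
  also have "prob \<dots> = (\<Prod>i\<in>I. prob (X i -` (space N - B) \<inter> space M))"
    using False B \<open>finite I\<close> by (intro indep_varsD[OF indep]) auto
  also have "\<dots> \<le> (\<Prod>i\<in>I. 1 - p)"
  proof (rule prod_mono)
    fix i assume i: "i \<in> I"
    have "prob (X i -` (space N - B) \<inter> space M) = 1 - prob (X i -` B \<inter> space M)"
      unfolding miss[OF i] using rv[OF i] B by (intro prob_compl measurable_sets)
    then show "0 \<le> prob (X i -` (space N - B) \<inter> space M) \<and>
        prob (X i -` (space N - B) \<inter> space M) \<le> 1 - p"
      using hit[OF i] by simp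
  qed
  finally show ?thesis by simp
qed simp

lemma (in prob_space) prob_hits_all_ge:
  assumes indep: "indep_vars (\<lambda>_. N) X I" and "finite I" "finite T"
    and B: "\<And>t. t \<in> T \<Longrightarrow> B t \<in> sets N"
    and hit: "\<And>t i. t \<in> T \<Longrightarrow> i \<in> I \<Longrightarrow> p \<le> prob (X i -` B t \<inter> space M)"
  shows "1 - real (card T) * (1 - p) ^ card I \<le> prob {\<omega> \<in> space M. \<forall>t\<in>T. \<exists>i\<in>I. X i \<omega> \<in> B t}"
proof -
  define miss where "miss t = {\<omega> \<in> space M. \<forall>i\<in>I. X i \<omega> \<notin> B t}" for t
  have rv: "X i \<in> measurable M N" if "i \<in> I" for i
    using indep that by (auto simp: indep_vars_def)
  have miss_event: "miss t \<in> events" if "t \<in> T" for t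
    unfolding miss_def using rv B[OF that] \<open>finite I\<close>
    by (intro sets.sets_Collect_finite_All) (auto intro: measurable_sets_Collect)
  have "prob (\<Union>t\<in>T. miss t) \<le> (\<Sum>t\<in>T. prob (miss t))"
    using miss_event \<open>finite T\<close> by (intro finite_measure_subadditive_finite) auto
  also have "\<dots> \<le> (\<Sum>t\<in>T. (1 - p) ^ card I)"
    unfolding miss_def using B hit
    by (intro sum_mono prob_all_miss_le[OF indep \<open>finite I\<close>]) auto
  finally have "prob (\<Union>t\<in>T. miss t) \<le> real (card T) * (1 - p) ^ card I" by simp
  moreover have "{\<omega> \<in> space M. \<forall>t\<in>T. \<exists>i\<in>I. X i \<omega> \<in> B t} = space M - (\<Union>t\<in>T. miss t)"
    unfolding miss_def by auto
  moreover have "prob (space M - (\<Union>t\<in>T. miss t)) = 1 - prob (\<Union>t\<in>T. miss t)"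
    using miss_event \<open>finite T\<close> by (intro prob_compl sets.finite_UN) auto
  ultimately show ?thesis by simp
qed

lemma (in prob_space) hit_prob_ge_of_distr:
  assumes "distr M N X = pY" "X \<in> measurable M N" "B \<in> sets N" "p \<le> measure pY B"
  shows "p \<le> prob (X -` B \<inter> space M)"
  using assms measure_distr[of X M N B] by simp

lemma (in prob_space) heavy_points_sampled:
  assumes indep: "indep_vars (\<lambda>_. count_space Y) X {..<m}"
    and distr: "\<forall>i<m. distr M (count_space Y) (X i) = pY"
    and "finite Y" "p \<le> 1" and bound: "real (card Y) * (1 - p) ^ m \<le> \<delta>"
  shows "1 - \<delta> \<le> prob {\<omega> \<in> space M. {y \<in> Y. p \<le> measure pY {y}} \<subseteq> (\<lambda>i. X i \<omega>) ` {..<m}}"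
proof -
  define T where "T = {y \<in> Y. p \<le> measure pY {y}}"
  have rv: "X i \<in> measurable M (count_space Y)" if "i < m" for i
    using indep that by (auto simp: indep_vars_def)
  have hit: "p \<le> prob (X i -` {t} \<inter> space M)" if "t \<in> T" "i < m" for t i
    using that distr rv[OF \<open>i < m\<close>] by (intro hit_prob_ge_of_distr) (auto simp: T_def)
  have "{\<omega> \<in> space M. T \<subseteq> (\<lambda>i. X i \<omega>) ` {..<m}} =
      {\<omega> \<in> space M. \<forall>t\<in>T. \<exists>i\<in>{..<m}. X i \<omega> \<in> {t}}"
    by auto
  moreover have "1 - real (card T) * (1 - p) ^ card {..<m} \<le>
      prob {\<omega> \<in> space M. \<forall>t\<in>T. \<exists>i\<in>{..<m}. X i \<omega> \<in> {t}}"
    using \<open>finite Y\<close> hit by (intro prob_hits_all_ge[OF indep]) (auto simp: T_def)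
  moreover have "real (card T) * (1 - p) ^ m \<le> real (card Y) * (1 - p) ^ m"
    using \<open>finite Y\<close> \<open>p \<le> 1\<close> by (intro mult_right_mono) (auto simp: T_def intro!: card_mono)
  ultimately show ?thesis
    using bound unfolding T_def by simp
qed

lemma closed_linf_cball: "closed (linf_cball c r)"
  unfolding linf_cball_def by (intro closed_Collect_all closed_Collect_le continuous_intros)

lemma mem_linf_cball_commute: "x \<in> linf_cball y r \<longleftrightarrow> y \<in> linf_cball x r"
  unfolding linf_cball_def by (simp add: abs_minus_commute)

lemma linf_cball_subset_double:
  assumes "x \<in> linf_cball c r"
  shows "linf_cball c r \<subseteq> linf_cball x (2 * r)"
proof
  fix y assume y: "y \<in> linf_cball c r"
  have "\<bar>y $ j - x $ j\<bar> \<le> 2 * r" for j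
  proof -
    have "\<bar>y $ j - c $ j\<bar> \<le> r" "\<bar>x $ j - c $ j\<bar> \<le> r"
      using y assms by (auto simp: linf_cball_def)
    then show ?thesis by linarith
  qed
  then show "y \<in> linf_cball x (2 * r)" by (simp add: linf_cball_def)
qed

lemma sets_Collect_subset_closed:
  fixes S :: "'b::{metric_space, second_countable_topology} set"
  assumes closed: "\<And>\<omega>. \<omega> \<in> space M \<Longrightarrow> closed (C \<omega>)"
    and mem: "\<And>y. {\<omega> \<in> space M. y \<in> C \<omega>} \<in> sets M"
  shows "{\<omega> \<in> space M. S \<subseteq> C \<omega>} \<in> sets M"
proof -
  obtain D where "countable D" "D \<subseteq> S" "S \<subseteq> closure D"
    by (rule separable)
  then have "S \<subseteq> C \<omega> \<longleftrightarrow> D \<subseteq> C \<omega>" if "\<omega> \<in> space M" for \<omega>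
    using closure_minimal[OF _ closed[OF that], of D] by blast
  then have "{\<omega> \<in> space M. S \<subseteq> C \<omega>} = {\<omega> \<in> space M. \<forall>y\<in>D. y \<in> C \<omega>}"
    by blast
  also have "\<dots> \<in> sets M"
    using mem \<open>countable D\<close> by (intro sets.sets_Collect_countable_All')
  finally show ?thesis .
qed

lemma sets_Collect_subset_UN_linf_cball:
  fixes X :: "nat \<Rightarrow> 'a \<Rightarrow> real^'n"
  assumes rv: "\<And>i. i < m \<Longrightarrow> X i \<in> borel_measurable M"
  shows "{\<omega> \<in> space M. S \<subseteq> (\<Union>i<m. linf_cball (X i \<omega>) r)} \<in> sets M"
proof (rule sets_Collect_subset_closed)
  show "closed (\<Union>i<m. linf_cball (X i \<omega>) r)" for \<omega>
    by (intro closed_UN finite_lessThan ballI closed_linf_cball)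
  fix y
  have "{\<omega> \<in> space M. y \<in> (\<Union>i<m. linf_cball (X i \<omega>) r)} =
      {\<omega> \<in> space M. \<exists>i\<in>{..<m}. X i \<omega> \<in> linf_cball y r}"
    by (simp add: mem_linf_cball_commute)
  also have "\<dots> \<in> sets M"
  proof (intro sets.sets_Collect_finite_Ex finite_lessThan)
    fix i assume "i \<in> {..<m}"
    then show "{\<omega> \<in> space M. X i \<omega> \<in> linf_cball y r} \<in> sets M"
      using measurable_sets_Collect[OF rv, of i "\<lambda>z. z \<in> linf_cball y r"]
      by (simp add: borel_closed closed_linf_cball)
  qed
  finally show "{\<omega> \<in> space M. y \<in> (\<Union>i<m. linf_cball (X i \<omega>) r)} \<in> sets M" .
qed

lemma (in prob_space) heavy_bins_covered:
  fixes X :: "nat \<Rightarrow> 'a \<Rightarrow> real^'n"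
  assumes bins: "\<forall>b\<in>Q. \<exists>c. b = linf_cball c (\<gamma> / 2)" and "finite Q"
    and indep: "indep_vars (\<lambda>_. borel) X {..<m}"
    and distr: "\<forall>i<m. distr M borel (X i) = pY"
    and "p \<le> 1" and bound: "real (card Q) * (1 - p) ^ m \<le> \<delta>"
  shows "1 - \<delta> \<le> prob {\<omega> \<in> space M.
    {y. \<exists>b\<in>Q. y \<in> b \<and> p \<le> measure pY b} \<subseteq> (\<Union>i<m. linf_cball (X i \<omega>) \<gamma>)}"
    (is "_ \<le> prob ?E")
proof -
  define T where "T = {b \<in> Q. p \<le> measure pY b}"
  have rv: "X i \<in> borel_measurable M" if "i < m" for i
    using indep that by (auto simp: indep_vars_def)
  have borel_bin: "b \<in> sets borel" if "b \<in> Q" for b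
    using bins that closed_linf_cball by (metis borel_closed)
  have hit: "p \<le> prob (X i -` b \<inter> space M)" if "b \<in> T" "i < m" for b i
    using that distr rv[OF \<open>i < m\<close>] borel_bin by (intro hit_prob_ge_of_distr) (auto simp: T_def)
  have bin_in_ball: "b \<subseteq> linf_cball x \<gamma>" if "b \<in> Q" "x \<in> b" for b x
  proof -
    obtain c where b: "b = linf_cball c (\<gamma> / 2)" using bins \<open>b \<in> Q\<close> by blast
    show ?thesis
      using linf_cball_subset_double[of x c "\<gamma> / 2"] \<open>x \<in> b\<close> unfolding b by simp
  qed
  have "1 - real (card T) * (1 - p) ^ card {..<m} \<le>
      prob {\<omega> \<in> space M. \<forall>b\<in>T. \<exists>i\<in>{..<m}. X i \<omega> \<in> b}"
    using \<open>finite Q\<close> hit by (intro prob_hits_all_ge[OF indep]) (auto simp: T_def borel_bin)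
  also have "\<dots> \<le> prob ?E"
  proof (rule finite_measure_mono)
    show "{\<omega> \<in> space M. \<forall>b\<in>T. \<exists>i\<in>{..<m}. X i \<omega> \<in> b} \<subseteq> ?E"
    proof safe
      fix \<omega> y b
      assume "\<forall>b\<in>T. \<exists>i\<in>{..<m}. X i \<omega> \<in> b" "b \<in> Q" "y \<in> b" "p \<le> measure pY b"
      then obtain i where "i < m" "X i \<omega> \<in> b" by (auto simp: T_def)
      then show "y \<in> (\<Union>i<m. linf_cball (X i \<omega>) \<gamma>)"
        using bin_in_ball \<open>b \<in> Q\<close> \<open>y \<in> b\<close> by blast
    qed
    have "{\<omega> \<in> space M. \<forall>b\<in>T. b \<subseteq> (\<Union>i<m. linf_cball (X i \<omega>) \<gamma>)} \<in> events"
      using \<open>finite Q\<close> rv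
      by (intro sets.sets_Collect_finite_All sets_Collect_subset_UN_linf_cball) (auto simp: T_def)
    moreover have "?E = {\<omega> \<in> space M. \<forall>b\<in>T. b \<subseteq> (\<Union>i<m. linf_cball (X i \<omega>) \<gamma>)}"
      unfolding T_def by auto
    ultimately show "?E \<in> events" by simp
  qed
  finally have "1 - real (card T) * (1 - p) ^ m \<le> prob ?E" by simp
  moreover have "real (card T) * (1 - p) ^ m \<le> real (card Q) * (1 - p) ^ m"
    using \<open>finite Q\<close> \<open>p \<le> 1\<close> by (intro mult_right_mono) (auto simp: T_def intro!: card_mono)
  ultimately show ?thesis
    using bound by simp
qed

theorem theorem1:
  fixes p \<delta> :: real and m :: nat
  assumes "0 < p" "p < 1" "0 < \<delta>" "\<delta> < 1"
  shows
   "(\<forall>(P::'w measure) (Ycat::'y set) (pY::'y measure) (Y::nat \<Rightarrow> 'w \<Rightarrow> 'y).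
      prob_space P \<and> finite Ycat
      \<and> prob_space.indep_vars P (\<lambda>_. count_space Ycat) Y {..<m}
      \<and> (\<forall>i<m. distr P (count_space Ycat) (Y i) = pY)
      \<and> real m \<ge> max (real (card Ycat)) (ln (\<delta> / real (card Ycat)) / ln (1 - p))
      \<longrightarrow> measure P {\<omega> \<in> space P. {y \<in> Ycat. measure pY {y} \<ge> p} \<subseteq> (\<lambda>i. Y i \<omega>) ` {..<m}}
            \<ge> 1 - \<delta>)
  \<and> (\<forall>(P::'v measure) (Yset::(real^'n) set) (\<gamma>::real) (Yq::(real^'n) set set)
       (pY::(real^'n) measure) (Y::nat \<Rightarrow> 'v \<Rightarrow> real^'n).
      prob_space P \<and> bounded Yset \<and> \<gamma> > 0 \<and> min_bin_cover \<gamma> Yset Yq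
      \<and> prob_space.indep_vars P (\<lambda>_. borel) Y {..<m}
      \<and> (\<forall>i<m. \<forall>\<omega>\<in>space P. Y i \<omega> \<in> Yset)
      \<and> (\<forall>i<m. distr P borel (Y i) = pY)
      \<and> real m \<ge> max (real (card Yq)) (ln (\<delta> / real (card Yq)) / ln (1 - p))
      \<longrightarrow> measure P {\<omega> \<in> space P.
              {y. \<exists>b\<in>Yq. y \<in> b \<and> measure pY b \<ge> p} \<subseteq> (\<Union>i<m. linf_cball (Y i \<omega>) \<gamma>)}
            \<ge> 1 - \<delta>)"
proof (intro conjI allI impI; elim conjE)
  fix P :: "'w measure" and Ycat :: "'y set" and pY :: "'y measure" and Y :: "nat \<Rightarrow> 'w \<Rightarrow> 'y"
  assume "prob_space P" "finite Ycat" "prob_space.indep_vars P (\<lambda>_. count_space Ycat) Y {..<m}"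
    "\<forall>i<m. distr P (count_space Ycat) (Y i) = pY"
    "real m \<ge> max (real (card Ycat)) (ln (\<delta> / real (card Ycat)) / ln (1 - p))"
  then show "measure P {\<omega> \<in> space P. {y \<in> Ycat. measure pY {y} \<ge> p} \<subseteq> (\<lambda>i. Y i \<omega>) ` {..<m}}
      \<ge> 1 - \<delta>"
    using assms mult_power_le_of_ln_bound[of p \<delta> "card Ycat" m]
    by (intro prob_space.heavy_points_sampled) auto
next
  fix P :: "'v measure" and Yset :: "(real^'n) set" and \<gamma> :: real and Yq :: "(real^'n) set set"
    and pY :: "(real^'n) measure" and Y :: "nat \<Rightarrow> 'v \<Rightarrow> real^'n"
  assume "prob_space P" "min_bin_cover \<gamma> Yset Yq" "prob_space.indep_vars P (\<lambda>_. borel) Y {..<m}"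
    "\<forall>i<m. distr P borel (Y i) = pY"
    "real m \<ge> max (real (card Yq)) (ln (\<delta> / real (card Yq)) / ln (1 - p))"
  then show "measure P {\<omega> \<in> space P.
      {y. \<exists>b\<in>Yq. y \<in> b \<and> measure pY b \<ge> p} \<subseteq> (\<Union>i<m. linf_cball (Y i \<omega>) \<gamma>)} \<ge> 1 - \<delta>"
    using assms mult_power_le_of_ln_bound[of p \<delta> "card Yq" m]
    by (intro prob_space.heavy_bins_covered) (auto simp: min_bin_cover_def bin_cover_def)
qed

end
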